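(* Let $G$ be an $e_1$-gate graph and let $\mathcal F$ be the ground space (the $e_1$-eigenspace) of $A(G)$. Let $\mathcal F_\pm=\{|\alpha\rangle|\pm\rangle:|\alpha\rangle\in\mathcal F\}$, where $|\pm\rangle=\frac1{\sqrt2}(|0\rangle\pm|1\rangle)$. Then the smallest eigenvalue of $A(G^{\rm SL})$ is $e_1$, its eigenspace (the ground space of $A(G^{\rm SL})$) is exactly $\mathcal F_-$, and for every unit vector $|v\rangle\in\mathcal F_+$ we have $\langle v|\,2\,\Pi_{\mathcal N}\otimes\Pi_+\,|v\rangle\ge \frac14$.
   Context: Let $g_0$ be a fixed $128$-vertex simple graph with vertices labeled $(z,t,j)$, $z\in\{0,1\}$, $t\in[8]$, $j\in\{0,\dots,7\}$, whose adjacency matrix $A(g_0)$ has smallest eigenvalue $e_1=-1-3\sqrt2$, with the corresponding eigenspace having orthonormal basis $|\psi_{z,0}\rangle=\frac{1}{\sqrt8}\big(|z\rangle(|1\rangle+|3\rangle+|5\rangle+|7\rangle)+H|z\rangle(|2\rangle+|8\rangle)+HT|z\rangle(|4\rangle+|6\rangle)\big)|\omega\rangle$ and $|\psi_{z,1}\rangle=|\psi_{z,0}\rangle^*$, where $H=\frac1{\sqrt2}\begin{pmatrix}1&1\\1&-1\end{pmatrix}$, $T=\mathrm{diag}(1,e^{i\pi/4})$, $|\omega\rangle=\frac1{\sqrt8}\sum_{j=0}^7 e^{-i\pi j/4}|j\rangle$. A gate diagram consists of $R$ diagram elements $q\in[R]$, each with a label $U_q\in\{1,H,HT\}$ and node set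 $\{(q,z,t): z\in\{0,1\},\ t\in\{1,3\}\cup T(U_q)\}$, where $T(H)=\{2,8\}$, $T(HT)=\{4,6\}$, $T(1)=\{5,7\}$; together with a set $\mathcal S$ of nodes and a set $\mathcal E$ of unordered pairs of nodes, such that each node belongs to at most one element of $\mathcal S$ or pair of $\mathcal E$. The associated gate graph $G$ has vertices $(q,z,t,j)$, $q\in[R]$, $z\in\{0,1\}$, $t\in[8]$, $j\in\{0,\dots,7\}$, and adjacency matrix $A(G)=1_q\otimes A(g_0)+h_{\mathcal S}+h_{\mathcal E}$, with $h_{\mathcal S}=\sum_{(q,z,t)\in\mathcal S}|q,z,t\rangle\langle q,z,t|\otimes 1_j$ and $h_{\mathcal E}=\sum_{\{(q,z,t),(q',z',t')\}\in\mathcal E}(|q,z,t\rangle+|q',z',t'\rangle)(\langle q,z,t|+\langle q',z',t'|)\otimes 1_j$. $G$ is an $e_1$-gate graph if the smallest eigenvalue of $A(G)$ equals $e_1$. Let $\mathcal N=\{(q,z,t,j): (q,z,t)\notin\mathcal S \text{ and } (q,z,t) \text{ belongs to no pair in } \mathcal E\}$, $\Pi_{\mathcal N}=\sum_{v\in\mathcal N}|v\rangle\langle v|$, and $\Pi_+=|+\rangle\langle+|$ on $\mathbb C^2=\mathrm{span}\{|0\rangle,|1\rangle\}$. The graph $G^{\rm SL}$ has vertex set $V(G)\times\{0,1\}$ (vertices $(q,z,t,j,d)$) and adjacency matrix $A(G^{\rm SL})=A(G)\otimes 1_d+2\,\Pi_{\mathcal N}\otimes\Pi_+$. *)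

theory Defs
  imports Complex_Main
begin

text \<open>A matrix on a finite index set V is a function 'v => 'v => complex (only entries
  with both indices in V matter); a vector is a function 'v => complex vanishing outside V.\<close>

definition mvec :: "'v set \<Rightarrow> ('v \<Rightarrow> 'v \<Rightarrow> complex) \<Rightarrow> ('v \<Rightarrow> complex) \<Rightarrow> 'v \<Rightarrow> complex" where
  "mvec V M v = (\<lambda>x. \<Sum>y\<in>V. M x y * v y)"

definition supported :: "'v set \<Rightarrow> ('v \<Rightarrow> complex) \<Rightarrow> bool" where
  "supported V v \<longleftrightarrow> (\<forall>x. x \<notin> V \<longrightarrow> v x = 0)"

definition eigenspace :: "'v set \<Rightarrow> ('v \<Rightarrow> 'v \<Rightarrow> complex) \<Rightarrow> real \<Rightarrow> ('v \<Rightarrow> complex) set" where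
  "eigenspace V M e = {v. supported V v \<and> (\<forall>x\<in>V. mvec V M v x = complex_of_real e * v x)}"

definition has_eigenvalue :: "'v set \<Rightarrow> ('v \<Rightarrow> 'v \<Rightarrow> complex) \<Rightarrow> real \<Rightarrow> bool" where
  "has_eigenvalue V M e \<longleftrightarrow> (\<exists>v\<in>eigenspace V M e. \<exists>x\<in>V. v x \<noteq> 0)"

text \<open>Smallest eigenvalue (all matrices considered are real symmetric, so the spectrum is real).\<close>
definition min_eigenvalue :: "'v set \<Rightarrow> ('v \<Rightarrow> 'v \<Rightarrow> complex) \<Rightarrow> real \<Rightarrow> bool" where
  "min_eigenvalue V M e \<longleftrightarrow> has_eigenvalue V M e \<and> (\<forall>\<mu>. has_eigenvalue V M \<mu> \<longrightarrow> e \<le> \<mu>)"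

definition cinner :: "'v set \<Rightarrow> ('v \<Rightarrow> complex) \<Rightarrow> ('v \<Rightarrow> complex) \<Rightarrow> complex" where
  "cinner V u w = (\<Sum>x\<in>V. cnj (u x) * w x)"

definition qform :: "'v set \<Rightarrow> ('v \<Rightarrow> 'v \<Rightarrow> complex) \<Rightarrow> ('v \<Rightarrow> complex) \<Rightarrow> complex" where
  "qform V M v = cinner V v (mvec V M v)"

definition e1 :: real where "e1 = -1 - 3 * sqrt 2"

definition V0 :: "(nat \<times> nat \<times> nat) set" where
  "V0 = {(z,t,j). z < 2 \<and> 1 \<le> t \<and> t \<le> 8 \<and> j < 8}"

definition Hm :: "nat \<Rightarrow> nat \<Rightarrow> complex" where
  "Hm a b = (if a = 1 \<and> b = 1 then -1 else 1) / complex_of_real (sqrt 2)"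

definition Tm :: "nat \<Rightarrow> complex" where
  "Tm b = (if b = 1 then cis (pi / 4) else 1)"

text \<open>Entry (a,b) of the single-qubit operator attached to position t in psi_{z,0}:
  1 for t odd, H for t in {2,8}, HT for t in {4,6}.\<close>
definition gate_at :: "nat \<Rightarrow> nat \<Rightarrow> nat \<Rightarrow> complex" where
  "gate_at t a b =
     (if t \<in> {1,3,5,7} then (if a = b then 1 else 0)
      else if t \<in> {2,8} then Hm a b
      else Hm a b * Tm b)"

definition omega :: "nat \<Rightarrow> complex" where
  "omega j = cis (- pi * real j / 4) / complex_of_real (sqrt 8)"

definition psi :: "nat \<Rightarrow> nat \<Rightarrow> (nat \<times> nat \<times> nat) \<Rightarrow> complex" where
  "psi z c = (\<lambda>(z',t,j). if (z',t,j) \<in> V0 then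
      (let w = gate_at t z' z * omega j / complex_of_real (sqrt 8) in if c = 0 then w else cnj w)
      else 0)"

definition is_g0 :: "((nat \<times> nat \<times> nat) \<Rightarrow> (nat \<times> nat \<times> nat) \<Rightarrow> complex) \<Rightarrow> bool" where
  "is_g0 A0 \<longleftrightarrow>
     (\<forall>x\<in>V0. \<forall>y\<in>V0. (A0 x y = 0 \<or> A0 x y = 1) \<and> A0 x y = A0 y x) \<and>
     (\<forall>x\<in>V0. A0 x x = 0) \<and>
     min_eigenvalue V0 A0 e1 \<and>
     eigenspace V0 A0 e1 =
       {(\<lambda>x. \<Sum>(z,c)\<in>{0..<2}\<times>{0..<2}. k (z,c) * psi z c x) | k. True}"

datatype glabel = Id1 | Had | HadT

definition Tset :: "glabel \<Rightarrow> nat set" where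
  "Tset U = (case U of Had \<Rightarrow> {2,8} | HadT \<Rightarrow> {4,6} | Id1 \<Rightarrow> {5,7})"

definition nodes :: "nat \<Rightarrow> (nat \<Rightarrow> glabel) \<Rightarrow> (nat \<times> nat \<times> nat) set" where
  "nodes R U = {(q,z,t). 1 \<le> q \<and> q \<le> R \<and> z < 2 \<and> t \<in> {1,3} \<union> Tset (U q)}"

definition gate_diagram :: "nat \<Rightarrow> (nat \<Rightarrow> glabel) \<Rightarrow> (nat \<times> nat \<times> nat) set
      \<Rightarrow> (nat \<times> nat \<times> nat) set set \<Rightarrow> bool" where
  "gate_diagram R U S E \<longleftrightarrow>
     S \<subseteq> nodes R U \<and>
     (\<forall>e\<in>E. e \<subseteq> nodes R U \<and> card e = 2) \<and>
     (\<forall>n\<in>S. \<forall>e\<in>E. n \<notin> e) \<and>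
     (\<forall>e\<in>E. \<forall>e'\<in>E. e \<noteq> e' \<longrightarrow> e \<inter> e' = {})"

type_synonym vert = "nat \<times> nat \<times> nat \<times> nat"

definition VG :: "nat \<Rightarrow> vert set" where
  "VG R = {(q,z,t,j). 1 \<le> q \<and> q \<le> R \<and> (z,t,j) \<in> V0}"

definition node_of :: "vert \<Rightarrow> nat \<times> nat \<times> nat" where
  "node_of x = (case x of (q,z,t,j) \<Rightarrow> (q,z,t))"

definition jof :: "vert \<Rightarrow> nat" where
  "jof x = (case x of (q,z,t,j) \<Rightarrow> j)"

text \<open>A(G) = 1_q (x) A(g_0) + h_S + h_E.\<close>
definition AG :: "((nat \<times> nat \<times> nat) \<Rightarrow> (nat \<times> nat \<times> nat) \<Rightarrow> complex)
     \<Rightarrow> (nat \<times> nat \<times> nat) set \<Rightarrow> (nat \<times> nat \<times> nat) set set \<Rightarrow> vert \<Rightarrow> vert \<Rightarrow> complex" where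
  "AG A0 S E = (\<lambda>(q,z,t,j) (q',z',t',j').
      (if q = q' then A0 (z,t,j) (z',t',j') else 0)
    + (if (q,z,t) = (q',z',t') \<and> (q,z,t) \<in> S \<and> j = j' then 1 else 0)
    + (\<Sum>e\<in>E. if (q,z,t) \<in> e \<and> (q',z',t') \<in> e \<and> j = j' then 1 else 0))"

definition Nset :: "nat \<Rightarrow> (nat \<times> nat \<times> nat) set \<Rightarrow> (nat \<times> nat \<times> nat) set set \<Rightarrow> vert set" where
  "Nset R S E = {x\<in>VG R. node_of x \<notin> S \<and> (\<forall>e\<in>E. node_of x \<notin> e)}"

definition VSL :: "nat \<Rightarrow> (vert \<times> nat) set" where
  "VSL R = VG R \<times> {0,1}"

definition Piplus :: "nat \<Rightarrow> nat \<Rightarrow> complex" where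
  "Piplus d d' = 1/2"

definition penalty :: "nat \<Rightarrow> (nat \<times> nat \<times> nat) set \<Rightarrow> (nat \<times> nat \<times> nat) set set
     \<Rightarrow> vert \<times> nat \<Rightarrow> vert \<times> nat \<Rightarrow> complex" where
  "penalty R S E = (\<lambda>(x,d) (y,d'). 2 * (if x = y \<and> x \<in> Nset R S E then 1 else 0) * Piplus d d')"

definition ASL :: "((nat \<times> nat \<times> nat) \<Rightarrow> (nat \<times> nat \<times> nat) \<Rightarrow> complex) \<Rightarrow> nat
     \<Rightarrow> (nat \<times> nat \<times> nat) set \<Rightarrow> (nat \<times> nat \<times> nat) set set \<Rightarrow> vert \<times> nat \<Rightarrow> vert \<times> nat \<Rightarrow> complex" where
  "ASL A0 R S E = (\<lambda>(x,d) (y,d').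
      AG A0 S E x y * (if d = d' then 1 else 0) + penalty R S E (x,d) (y,d'))"

text \<open>|alpha>|+> (s = 1) and |alpha>|-> (s = -1).\<close>
definition tensor_pm :: "complex \<Rightarrow> (vert \<Rightarrow> complex) \<Rightarrow> vert \<times> nat \<Rightarrow> complex" where
  "tensor_pm s \<alpha> = (\<lambda>(x,d). \<alpha> x *
      (if d = 0 then 1 / complex_of_real (sqrt 2) else if d = 1 then s / complex_of_real (sqrt 2) else 0))"

end

theory Submission
  imports Defs "HOL-Analysis.Analysis"
begin

text \<open>
  Write an eigenvector of A(G^SL) = A(G) \<otimes> 1 + 2 \<Pi>_\<N> \<otimes> \<Pi>_+ in the |+>,|-> basis of the
  extra qubit. Its |-> component is an eigenvector of A(G), while its |+> component is an
  eigenvector of A(G) + 2\<Pi>_\<N>. Hence every eigenvalue is at least e1 (the penalty is positive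
  semidefinite), and an e1-eigenvector has a |+> component which is a ground state of A(G)
  with no weight on \<N>. But every ground state of A(G) restricts on each diagram element to a
  ground state of A(g_0), which is spread uniformly over the eight positions t; since some
  position of each element is not a node, at least 1/8 of its weight lies in \<N>. So the |+>
  component vanishes, which gives the ground space \<F>_-, and for |\<alpha>>|+> \<in> \<F>_+ the penalty is
  2 \<cdot> (1/8) = 1/4 at least.
\<close>

section \<open>Rayleigh quotients of Hermitian matrices\<close>

definition sqnorm :: "'v set \<Rightarrow> ('v \<Rightarrow> complex) \<Rightarrow> real" where
  "sqnorm V v = (\<Sum>x\<in>V. (cmod (v x))\<^sup>2)"

definition hermitian_on :: "'v set \<Rightarrow> ('v \<Rightarrow> 'v \<Rightarrow> complex) \<Rightarrow> bool" where
  "hermitian_on V M \<longleftrightarrow> (\<forall>x\<in>V. \<forall>y\<in>V. M y x = cnj (M x y))"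

definition sesq :: "'v set \<Rightarrow> ('v \<Rightarrow> 'v \<Rightarrow> complex) \<Rightarrow> ('v \<Rightarrow> complex) \<Rightarrow> ('v \<Rightarrow> complex) \<Rightarrow> complex" where
  "sesq V M u w = cinner V u (mvec V M w)"

lemma of_real_cmod_square: "complex_of_real ((cmod z)\<^sup>2) = cnj z * z"
  by (simp only: complex_norm_square mult.commute)

lemma cinner_self_eq_sqnorm: "cinner V v v = of_real (sqnorm V v)"
  unfolding cinner_def sqnorm_def of_real_sum of_real_cmod_square ..

lemma sqnorm_nonneg: "0 \<le> sqnorm V v"
  unfolding sqnorm_def by (simp add: sum_nonneg)

lemma sqnorm_eq_0_imp_zero:
  assumes "finite V" "sqnorm V v = 0" "x \<in> V"
  shows "v x = 0"
  using assms unfolding sqnorm_def by (simp add: sum_nonneg_eq_0_iff)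

lemma sqnorm_scale: "sqnorm V (\<lambda>x. c * u x) = (cmod c)\<^sup>2 * sqnorm V u"
  unfolding sqnorm_def by (simp add: sum_distrib_left norm_mult power_mult_distrib)

lemma mvec_add: "mvec V M (\<lambda>y. f y + g y) x = mvec V M f x + mvec V M g x"
  unfolding mvec_def by (simp add: distrib_left sum.distrib)

lemma mvec_diff: "mvec V M (\<lambda>y. f y - g y) x = mvec V M f x - mvec V M g x"
  unfolding mvec_def by (simp add: right_diff_distrib sum_subtractf)

lemma mvec_scale: "mvec V M (\<lambda>y. c * f y) x = c * mvec V M f x"
  unfolding mvec_def by (simp add: sum_distrib_left ac_simps)

lemma mvec_diag_shift:
  assumes "finite V" "x \<in> V"
  shows "mvec V (\<lambda>x y. M x y - (if x = y then c else 0)) v x = mvec V M v x - c * v x"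
proof -
  have "(M x y - (if x = y then c else 0)) * v y = M x y * v y - (if x = y then c * v y else 0)" for y
    by (simp add: left_diff_distrib)
  then show ?thesis
    using assms unfolding mvec_def by (simp add: sum_subtractf)
qed

lemma qform_scale: "qform V M (\<lambda>x. c * u x) = cnj c * c * qform V M u"
  unfolding qform_def cinner_def mvec_def by (simp add: sum_distrib_left ac_simps)

lemma qform_diag_shift:
  assumes "finite V"
  shows "qform V (\<lambda>x y. M x y - (if x = y then c else 0)) v = qform V M v - c * cinner V v v"
proof -
  have "qform V (\<lambda>x y. M x y - (if x = y then c else 0)) v = (\<Sum>x\<in>V. cnj (v x) * (mvec V M v x - c * v x))"
    unfolding qform_def cinner_def using mvec_diag_shift[OF assms] by (intro sum.cong) auto
  then show ?thesis
    unfolding qform_def cinner_def by (simp add: right_diff_distrib sum_subtractf sum_distrib_left ac_simps)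
qed

lemma qform_add_sum: "qform V (\<lambda>x y. M1 x y + M2 x y + M3 x y) u = qform V M1 u + qform V M2 u + qform V M3 u"
  unfolding qform_def cinner_def mvec_def by (simp add: distrib_left distrib_right sum.distrib)

lemma qform_eigenspace:
  assumes "v \<in> eigenspace V M e"
  shows "qform V M v = complex_of_real e * cinner V v v"
proof -
  have "qform V M v = (\<Sum>x\<in>V. complex_of_real e * (cnj (v x) * v x))"
    using assms unfolding qform_def cinner_def eigenspace_def by (intro sum.cong refl) auto
  then show ?thesis
    unfolding cinner_def by (simp add: sum_distrib_left)
qed

lemma eigenspace_scale:
  assumes "v \<in> eigenspace V M e"
  shows "(\<lambda>x. c * v x) \<in> eigenspace V M e"
  using assms unfolding eigenspace_def supported_def by (simp add: mvec_scale)

lemma sesq_hermitian: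
  assumes "hermitian_on V M"
  shows "sesq V M u w = cnj (sesq V M w u)"
proof -
  have "sesq V M u w = (\<Sum>x\<in>V. \<Sum>y\<in>V. cnj (u x) * M x y * w y)"
    unfolding sesq_def cinner_def mvec_def by (simp add: sum_distrib_left mult.assoc)
  also have "\<dots> = (\<Sum>y\<in>V. \<Sum>x\<in>V. cnj (u x) * M x y * w y)"
    by (rule sum.swap)
  also have "\<dots> = (\<Sum>y\<in>V. \<Sum>x\<in>V. cnj (cnj (w y) * M y x * u x))"
  proof (intro sum.cong refl)
    fix x y assume "x \<in> V" "y \<in> V"
    then have "M x y = cnj (M y x)" using assms unfolding hermitian_on_def by blast
    then show "cnj (u x) * M x y * w y = cnj (cnj (w y) * M y x * u x)" by (simp add: ac_simps)
  qed
  also have "\<dots> = cnj (sesq V M w u)"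
    unfolding sesq_def cinner_def mvec_def by (simp add: sum_distrib_left mult.assoc)
  finally show ?thesis .
qed

lemma qform_add_scaled:
  "qform V M (\<lambda>x. v x + c * w x)
     = qform V M v + c * sesq V M v w + cnj c * sesq V M w v + cnj c * c * qform V M w"
proof -
  have inner: "(\<Sum>y\<in>V. M x y * (v y + c * w y)) = (\<Sum>y\<in>V. M x y * v y) + c * (\<Sum>y\<in>V. M x y * w y)" for x
    by (simp add: distrib_left sum.distrib sum_distrib_left ac_simps)
  show ?thesis
    unfolding qform_def sesq_def cinner_def mvec_def inner
    by (simp add: algebra_simps sum.distrib sum_distrib_left)
qed

lemma nonneg_quadratic_imp_linear_coeff_zero:
  fixes a b :: real
  assumes "\<forall>t. 0 \<le> 2 * t * a + t\<^sup>2 * b" "0 \<le> a"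
  shows "a = 0"
proof (rule ccontr)
  assume "a \<noteq> 0"
  with assms(2) have a: "a > 0" by simp
  show False
  proof (cases "b \<le> 0")
    case True
    have "0 \<le> 2 * (-1) * a + (-1)\<^sup>2 * b" using assms(1) by blast
    with a True show False by simp
  next
    case False
    have "0 \<le> 2 * (-a/b) * a + (-a/b)\<^sup>2 * b" using assms(1) by blast
    also have "\<dots> = - (a\<^sup>2 / b)" using False by (simp add: power2_eq_square field_simps)
    finally show False using a False by (simp add: divide_le_0_iff)
  qed
qed

text \<open>A positive semidefinite form vanishes at v only on the kernel: perturb v by real multiples of Mv.\<close>

lemma psd_qform_zero_imp_mvec_zero:
  assumes fin: "finite V" and herm: "hermitian_on V M"
    and psd: "\<And>u. supported V u \<Longrightarrow> 0 \<le> Re (qform V M u)"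
    and v: "supported V v" and zero: "Re (qform V M v) = 0"
  shows "\<forall>x\<in>V. mvec V M v x = 0"
proof -
  define w where "w = (\<lambda>x. if x \<in> V then mvec V M v x else 0)"
  define r where "r = sqnorm V (mvec V M v)"
  have wv: "sesq V M w v = of_real r"
    unfolding r_def cinner_self_eq_sqnorm[symmetric] sesq_def cinner_def w_def by (rule sum.cong) auto
  have vw: "sesq V M v w = of_real r"
    using sesq_hermitian[OF herm, of v w] wv by simp
  have "\<forall>t. 0 \<le> 2 * t * r + t\<^sup>2 * Re (qform V M w)"
  proof
    fix t :: real
    have "supported V (\<lambda>x. v x + of_real t * w x)"
      using v unfolding supported_def w_def by auto
    then have "0 \<le> Re (qform V M (\<lambda>x. v x + of_real t * w x))" by (rule psd)
    also have "\<dots> = 2 * t * r + t\<^sup>2 * Re (qform V M w)"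
      unfolding qform_add_scaled wv vw using zero by (simp add: power2_eq_square)
    finally show "0 \<le> 2 * t * r + t\<^sup>2 * Re (qform V M w)" .
  qed
  then have "r = 0"
    using nonneg_quadratic_imp_linear_coeff_zero sqnorm_nonneg unfolding r_def by blast
  then show ?thesis
    using sqnorm_eq_0_imp_zero[OF fin] unfolding r_def by blast
qed

lemma qform_attains_min_on_sphere:
  fixes V :: "'v set" and M :: "'v \<Rightarrow> 'v \<Rightarrow> complex"
  assumes fin: "finite V" and ne: "V \<noteq> {}"
  shows "\<exists>v0. supported V v0 \<and> sqnorm V v0 = 1 \<and>
     (\<forall>u. supported V u \<and> sqnorm V u = 1 \<longrightarrow> Re (qform V M v0) \<le> Re (qform V M u))"
proof -
  define B where "B = (\<lambda>x::'v. if x \<in> V then cball (0::complex) 1 else {0})"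
  define K where "K = PiE UNIV B \<inter> {v. sqnorm V v = 1}"
  have "compactin (product_topology (\<lambda>i. euclidean) UNIV) (PiE UNIV B)"
    unfolding compactin_PiE B_def by auto
  moreover have "closed {v::'v\<Rightarrow>complex. sqnorm V v = 1}"
    unfolding sqnorm_def by (intro closed_Collect_eq continuous_intros) auto
  ultimately have compact: "compact K"
    unfolding K_def by (auto simp: euclidean_product_topology)
  have in_K: "u \<in> K" if "supported V u" "sqnorm V u = 1" for u
  proof -
    have "cmod (u x) \<le> 1" if "x \<in> V" for x
    proof -
      have "(cmod (u x))\<^sup>2 \<le> sqnorm V u"
        unfolding sqnorm_def by (rule member_le_sum) (use that fin in auto)
      with \<open>sqnorm V u = 1\<close> show ?thesis by (simp add: power_le_one_iff abs_square_le_1)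
    qed
    then show ?thesis
      using that unfolding K_def B_def supported_def by (auto simp: PiE_iff)
  qed
  obtain x0 where x0: "x0 \<in> V" using ne by auto
  have "sqnorm V (\<lambda>x. if x = x0 then 1 else 0) = (\<Sum>x\<in>V. if x = x0 then 1 else 0)"
    unfolding sqnorm_def by (rule sum.cong) auto
  then have "supported V (\<lambda>x. if x = x0 then 1 else 0)" "sqnorm V (\<lambda>x. if x = x0 then 1 else 0) = 1"
    using x0 fin unfolding supported_def by auto
  then have "K \<noteq> {}" using in_K by blast
  moreover have "continuous_on K (\<lambda>v. Re (qform V M v))"
    unfolding qform_def cinner_def mvec_def
    by (intro continuous_intros) (auto intro: continuous_on_subset[OF continuous_on_product_coordinates])
  ultimately obtain v0 where v0: "v0 \<in> K" and min: "\<forall>u\<in>K. Re (qform V M v0) \<le> Re (qform V M u)"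
    using continuous_attains_inf[OF compact] by blast
  have "supported V v0"
    using v0 unfolding K_def B_def supported_def by (auto simp: PiE_iff split: if_splits)
  with v0 min in_K show ?thesis unfolding K_def by blast
qed

lemma eigenvector_if_rayleigh_equality:
  assumes fin: "finite V" and herm: "hermitian_on V M"
    and bound: "\<And>w. supported V w \<Longrightarrow> e * sqnorm V w \<le> Re (qform V M w)"
    and u: "supported V u" and eq: "Re (qform V M u) = e * sqnorm V u"
  shows "u \<in> eigenspace V M e"
proof -
  define P where "P = (\<lambda>x y. M x y - (if x = y then complex_of_real e else 0))"
  have "hermitian_on V P"
    unfolding hermitian_on_def
  proof (intro ballI)
    fix x y assume "x \<in> V" "y \<in> V"
    then have "M y x = cnj (M x y)" using herm unfolding hermitian_on_def by blast
    then show "P y x = cnj (P x y)" unfolding P_def by simp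
  qed
  moreover have "0 \<le> Re (qform V P w)" if "supported V w" for w
    using bound[OF that] unfolding P_def qform_diag_shift[OF fin] cinner_self_eq_sqnorm by simp
  moreover have "Re (qform V P u) = 0"
    using eq unfolding P_def qform_diag_shift[OF fin] cinner_self_eq_sqnorm by simp
  ultimately have "\<forall>x\<in>V. mvec V P u x = 0"
    using psd_qform_zero_imp_mvec_zero[OF fin _ _ u] by blast
  then show ?thesis
    using u unfolding eigenspace_def P_def by (simp add: mvec_diag_shift[OF fin])
qed

lemma qform_ge_sphere_bound:
  assumes fin: "finite V"
    and sphere: "\<And>u. supported V u \<Longrightarrow> sqnorm V u = 1 \<Longrightarrow> m \<le> Re (qform V M u)"
    and w: "supported V w"
  shows "m * sqnorm V w \<le> Re (qform V M w)"
proof (cases "sqnorm V w = 0")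
  case True
  then have "\<forall>x\<in>V. w x = 0" using sqnorm_eq_0_imp_zero[OF fin] by blast
  with True show ?thesis unfolding qform_def cinner_def by simp
next
  case False
  then have pos: "sqnorm V w > 0" using sqnorm_nonneg[of V w] by simp
  define s where "s = sqrt (sqnorm V w)"
  have s: "s > 0" "s\<^sup>2 = sqnorm V w" using pos unfolding s_def by auto
  have "supported V (\<lambda>x. complex_of_real (1/s) * w x)"
    using w unfolding supported_def by auto
  moreover have "sqnorm V (\<lambda>x. complex_of_real (1/s) * w x) = 1"
    unfolding sqnorm_scale s(2)[symmetric] using s(1) by (simp add: norm_divide power_divide)
  ultimately have "m \<le> Re (qform V M (\<lambda>x. complex_of_real (1/s) * w x))"
    by (rule sphere)
  also have "\<dots> = Re (qform V M w) / s\<^sup>2"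
    unfolding qform_scale by (simp add: power2_eq_square)
  finally show ?thesis
    using pos unfolding s(2) by (simp add: pos_le_divide_eq)
qed

text \<open>A minimiser of the Rayleigh quotient is an eigenvector, so its value is an eigenvalue.\<close>

lemma rayleigh_lower_bound:
  assumes fin: "finite V" and herm: "hermitian_on V M"
    and ev: "\<And>\<mu>. has_eigenvalue V M \<mu> \<Longrightarrow> e \<le> \<mu>"
    and u: "supported V u"
  shows "e * sqnorm V u \<le> Re (qform V M u)"
proof (cases "V = {}")
  case True
  then show ?thesis unfolding sqnorm_def qform_def cinner_def by simp
next
  case False
  obtain v0 where v0: "supported V v0" "sqnorm V v0 = 1"
    and min: "\<And>u. supported V u \<Longrightarrow> sqnorm V u = 1 \<Longrightarrow> Re (qform V M v0) \<le> Re (qform V M u)"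
    using qform_attains_min_on_sphere[OF fin False, of M] by blast
  define m where "m = Re (qform V M v0)"
  have bound: "m * sqnorm V w \<le> Re (qform V M w)" if "supported V w" for w
    using qform_ge_sphere_bound[OF fin min that] unfolding m_def .
  have "v0 \<in> eigenspace V M m"
    using eigenvector_if_rayleigh_equality[OF fin herm bound v0(1)] v0(2) unfolding m_def by simp
  moreover have "\<exists>x\<in>V. v0 x \<noteq> 0"
    using v0(2) unfolding sqnorm_def by (metis (no_types, lifting) norm_zero sum.neutral zero_neq_one zero_power2)
  ultimately have "e \<le> m"
    using ev unfolding has_eigenvalue_def by blast
  then have "e * sqnorm V u \<le> m * sqnorm V u"
    using sqnorm_nonneg[of V u] by (simp add: mult_right_mono)
  also have "\<dots> \<le> Re (qform V M u)" by (rule bound[OF u])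
  finally show ?thesis .
qed

lemma gram_qform_nonneg:
  assumes "finite I"
    and gram: "\<And>x y. x \<in> V \<Longrightarrow> y \<in> V \<Longrightarrow> M x y = (\<Sum>i\<in>I. cnj (f i x) * f i y)"
  shows "0 \<le> Re (qform V M u)"
proof -
  have "qform V M u = (\<Sum>x\<in>V. \<Sum>y\<in>V. \<Sum>i\<in>I. cnj (f i x * u x) * (f i y * u y))"
    unfolding qform_def cinner_def mvec_def
    by (intro sum.cong refl) (simp add: gram sum_distrib_left sum_distrib_right ac_simps)
  also have "\<dots> = (\<Sum>x\<in>V. \<Sum>i\<in>I. \<Sum>y\<in>V. cnj (f i x * u x) * (f i y * u y))"
    by (intro sum.cong refl) (rule sum.swap)
  also have "\<dots> = (\<Sum>i\<in>I. \<Sum>x\<in>V. \<Sum>y\<in>V. cnj (f i x * u x) * (f i y * u y))"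
    by (rule sum.swap)
  also have "\<dots> = (\<Sum>i\<in>I. complex_of_real ((cmod (\<Sum>x\<in>V. f i x * u x))\<^sup>2))"
    by (simp only: sum_product cnj_sum of_real_cmod_square)
  finally show ?thesis by (simp add: sum_nonneg)
qed

section \<open>The ground space of g_0\<close>

lemma sum_lessThan_2: "(\<Sum>z<(2::nat). f z) = f 0 + f 1"
  by (simp add: numeral_2_eq_2)

lemma of_real_sqrt_2_square: "complex_of_real (sqrt 2) * complex_of_real (sqrt 2) = 2"
  by (simp flip: of_real_mult)

lemma gate_at_unitary:
  assumes "z1 < 2" "z2 < 2"
  shows "(\<Sum>z'<2. cnj (gate_at t z' z1) * gate_at t z' z2) = (if z1 = z2 then 1 else 0)"
proof -
  have z: "z1 \<in> {0,1}" "z2 \<in> {0,1}" using assms by auto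
  have H: "(\<Sum>z'<2. cnj (Hm z' z1) * Hm z' z2) = (if z1 = z2 then 1 else 0)"
    using z unfolding sum_lessThan_2 Hm_def by (auto simp: field_simps of_real_sqrt_2_square)
  have T: "cnj (Tm b) * Tm b = 1" for b
    unfolding Tm_def by (simp add: cis_cnj cis_mult)
  consider "t \<in> {1,3,5,7}" | "t \<notin> {1,3,5,7}" "t \<in> {2,8}" | "t \<notin> {1,3,5,7}" "t \<notin> {2,8}"
    by blast
  then show ?thesis
  proof cases
    case 1
    then show ?thesis unfolding gate_at_def sum_lessThan_2 using z by auto
  next
    case 2
    then show ?thesis using H unfolding gate_at_def by simp
  next
    case 3
    then have "(\<Sum>z'<2. cnj (gate_at t z' z1) * gate_at t z' z2)
        = cnj (Tm z1) * Tm z2 * (\<Sum>z'<2. cnj (Hm z' z1) * Hm z' z2)"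
      unfolding gate_at_def by (simp add: sum_distrib_left ac_simps)
    then show ?thesis unfolding H using T by simp
  qed
qed

lemma unitary_2_preserves_norm:
  fixes g :: "nat \<Rightarrow> nat \<Rightarrow> complex"
  assumes "\<And>z1 z2. z1 < 2 \<Longrightarrow> z2 < 2 \<Longrightarrow> (\<Sum>z'<2. cnj (g z' z1) * g z' z2) = (if z1 = z2 then 1 else 0)"
  shows "(\<Sum>z'<2. cnj (\<Sum>z<2. g z' z * k z) * (\<Sum>z<2. g z' z * k z)) = (\<Sum>z<2. cnj (k z) * k z)"
proof -
  have "(\<Sum>z'<2. cnj (\<Sum>z<2. g z' z * k z) * (\<Sum>z<2. g z' z * k z))
     = (\<Sum>z1<2. \<Sum>z2<2. cnj (k z1) * k z2 * (\<Sum>z'<2. cnj (g z' z1) * g z' z2))"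
    by (simp add: sum_lessThan_2 algebra_simps)
  also have "\<dots> = (\<Sum>z1<2. \<Sum>z2<2. cnj (k z1) * k z2 * (if z1 = z2 then 1 else 0))"
    using assms by (intro sum.cong refl) simp
  also have "\<dots> = (\<Sum>z<2. cnj (k z) * k z)" by (simp add: sum_lessThan_2)
  finally show ?thesis .
qed

lemma sum_omega_norm: "(\<Sum>j<8. cnj (omega j) * omega j) = 1"
proof -
  have "cnj (omega j) * omega j = 1/8" for j
    unfolding omega_def by (simp add: cis_cnj cis_mult flip: of_real_mult)
  then show ?thesis by (simp only:) simp
qed

text \<open>The squares omega j^2 = (-i)^j / 8 run over the fourth roots of unity twice.\<close>

lemma sum_omega_square: "(\<Sum>j<8. omega j * omega j) = 0"
proof -
  have "omega j * omega j = (-\<i>)^j / 8" for j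
  proof -
    have "omega j * omega j = (cis (- pi * real j / 4))\<^sup>2 / 8"
      unfolding omega_def by (simp add: power2_eq_square flip: of_real_mult)
    also have "(cis (- pi * real j / 4))\<^sup>2 = cis (2 * (- pi * real j / 4))"
      using Complex.DeMoivre[of "- pi * real j / 4" 2] by (simp only: of_nat_numeral)
    also have "\<dots> = cis (real j * (-(pi/2)))" by (simp add: field_simps)
    also have "\<dots> = (cis (-(pi/2)))^j" by (rule Complex.DeMoivre[symmetric])
    also have "\<dots> = (-\<i>)^j" by simp
    finally show ?thesis .
  qed
  then have "(\<Sum>j<8. omega j * omega j) = (\<Sum>j<8. (-\<i>)^j) / 8"
    by (simp only: sum_divide_distrib)
  also have "(\<Sum>j<8::nat. (-\<i>)^j) = 0" by (simp add: eval_nat_numeral)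
  finally show ?thesis by simp
qed

lemma sum_omega_combination_norm:
  "(\<Sum>j<8. cnj (a * omega j + b * cnj (omega j)) * (a * omega j + b * cnj (omega j))) = cnj a * a + cnj b * b"
proof -
  have "(\<Sum>j<8. cnj (a * omega j + b * cnj (omega j)) * (a * omega j + b * cnj (omega j)))
     = (\<Sum>j<8. (cnj a * a + cnj b * b) * (cnj (omega j) * omega j) + cnj a * b * cnj (omega j * omega j)
          + cnj b * a * (omega j * omega j))"
    by (rule sum.cong) (simp_all add: algebra_simps)
  also have "\<dots> = (cnj a * a + cnj b * b) * (\<Sum>j<8. cnj (omega j) * omega j)
      + cnj a * b * cnj (\<Sum>j<8. omega j * omega j) + cnj b * a * (\<Sum>j<8. omega j * omega j)"
    by (simp add: sum.distrib sum_distrib_left)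
  also have "\<dots> = cnj a * a + cnj b * b" unfolding sum_omega_norm sum_omega_square by simp
  finally show ?thesis .
qed

lemma V0_eq: "V0 = {..<2} \<times> {1..8} \<times> {..<8}"
  unfolding V0_def by auto

lemma finite_V0: "finite V0"
  unfolding V0_eq by simp

lemma sum_V0: "(\<Sum>u\<in>V0. f u) = (\<Sum>z<2. \<Sum>t\<in>{1..8}. \<Sum>j<8. f (z,t,j))"
  unfolding V0_eq by (simp add: sum.cartesian_product)

definition layer_weight :: "nat \<Rightarrow> (nat \<times> nat \<times> nat \<Rightarrow> complex) \<Rightarrow> real" where
  "layer_weight t \<beta> = (\<Sum>z<2. \<Sum>j<8. (cmod (\<beta> (z,t,j)))\<^sup>2)"

lemma sqnorm_V0_layers: "sqnorm V0 \<beta> = (\<Sum>t\<in>{1..8}. layer_weight t \<beta>)"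
  unfolding sqnorm_def sum_V0 layer_weight_def by (rule sum.swap)

lemma layer_weight_eq_sum_V0:
  assumes "t \<in> {1..8}"
  shows "layer_weight t \<beta> = (\<Sum>u\<in>V0. if fst (snd u) = t then (cmod (\<beta> u))\<^sup>2 else 0)"
proof -
  have "(\<Sum>u\<in>V0. if fst (snd u) = t then (cmod (\<beta> u))\<^sup>2 else 0)
      = (\<Sum>z<2. \<Sum>t'\<in>{1..8}. if t' = t then (\<Sum>j<8. (cmod (\<beta> (z,t',j)))\<^sup>2) else 0)"
    unfolding sum_V0 by (intro sum.cong refl) auto
  then show ?thesis unfolding layer_weight_def using assms by simp
qed

definition g0_span :: "(nat \<times> nat \<Rightarrow> complex) \<Rightarrow> nat \<times> nat \<times> nat \<Rightarrow> complex" where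
  "g0_span k = (\<lambda>x. \<Sum>(z,c)\<in>{0..<2}\<times>{0..<2}. k (z,c) * psi z c x)"

lemma g0_span_apply:
  assumes "z' < 2" "t \<in> {1..8}" "j < 8"
  shows "g0_span k (z',t,j) = ((\<Sum>z<2. gate_at t z' z * k (z,0)) * omega j
      + (\<Sum>z<2. cnj (gate_at t z' z) * k (z,1)) * cnj (omega j)) / complex_of_real (sqrt 8)"
proof -
  have "(z',t,j) \<in> V0" using assms unfolding V0_def by auto
  have "g0_span k (z',t,j) = (\<Sum>z<2. \<Sum>c<2. k (z,c) * psi z c (z',t,j))"
    unfolding g0_span_def atLeast0LessThan by (simp add: sum.cartesian_product)
  also have "\<dots> = (\<Sum>z<2. k (z,0) * (gate_at t z' z * omega j / complex_of_real (sqrt 8))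
        + k (z,1) * cnj (gate_at t z' z * omega j / complex_of_real (sqrt 8)))"
    unfolding sum_lessThan_2[of "\<lambda>c. k (_,c) * psi _ c (z',t,j)"] using \<open>(z',t,j) \<in> V0\<close>
    by (intro sum.cong refl) (simp add: psi_def Let_def)
  also have "\<dots> = ((\<Sum>z<2. gate_at t z' z * k (z,0)) * omega j
      + (\<Sum>z<2. cnj (gate_at t z' z) * k (z,1)) * cnj (omega j)) / complex_of_real (sqrt 8)"
    by (simp add: sum_lessThan_2 field_simps)
  finally show ?thesis .
qed

text \<open>The single-qubit gate at t is unitary and the two omega-components are orthogonal.\<close>

lemma layer_weight_g0_span:
  assumes t: "t \<in> {1..8}"
  shows "layer_weight t (g0_span k) = (\<Sum>z<2. (cmod (k (z,0)))\<^sup>2 + (cmod (k (z,1)))\<^sup>2) / 8"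
proof -
  define a where "a = (\<lambda>z'. \<Sum>z<2. gate_at t z' z * k (z,0))"
  define b where "b = (\<lambda>z'. \<Sum>z<2. cnj (gate_at t z' z) * k (z,1))"
  have unitary_cnj: "(\<Sum>z'<2. cnj (cnj (gate_at t z' z1)) * cnj (gate_at t z' z2)) = (if z1 = z2 then 1 else 0)"
    if "z1 < 2" "z2 < 2" for z1 z2
    using arg_cong[OF gate_at_unitary[OF that, of t], of cnj] by (simp del: complex_cnj_cnj)
  have s8: "cnj (X / complex_of_real (sqrt 8)) * (X / complex_of_real (sqrt 8)) = cnj X * X / 8" for X
    by (simp flip: of_real_mult)
  have "complex_of_real (layer_weight t (g0_span k))
      = (\<Sum>z'<2. \<Sum>j<8. cnj (g0_span k (z',t,j)) * g0_span k (z',t,j))"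
    unfolding layer_weight_def of_real_sum of_real_cmod_square ..
  also have "\<dots> = (\<Sum>z'<2. \<Sum>j<8. cnj (a z' * omega j + b z' * cnj (omega j)) * (a z' * omega j + b z' * cnj (omega j)) / 8)"
    using t by (intro sum.cong refl) (simp only: g0_span_apply a_def b_def s8 atLeastAtMost_iff lessThan_iff)
  also have "\<dots> = ((\<Sum>z'<2. cnj (a z') * a z') + (\<Sum>z'<2. cnj (b z') * b z')) / 8"
    by (simp only: sum_divide_distrib[symmetric] sum_omega_combination_norm sum.distrib add_divide_distrib)
  also have "(\<Sum>z'<2. cnj (a z') * a z') = (\<Sum>z<2. cnj (k (z,0)) * k (z,0))"
    unfolding a_def by (rule unitary_2_preserves_norm[OF gate_at_unitary])
  also have "(\<Sum>z'<2. cnj (b z') * b z') = (\<Sum>z<2. cnj (k (z,1)) * k (z,1))"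
    unfolding b_def by (rule unitary_2_preserves_norm[OF unitary_cnj])
  also have "((\<Sum>z<2. cnj (k (z,0)) * k (z,0)) + (\<Sum>z<2. cnj (k (z,1)) * k (z,1))) / 8
      = complex_of_real ((\<Sum>z<2. (cmod (k (z,0)))\<^sup>2 + (cmod (k (z,1)))\<^sup>2) / 8)"
    by (simp only: of_real_divide of_real_sum of_real_add of_real_cmod_square sum.distrib of_real_numeral)
  finally show ?thesis by (simp only: of_real_eq_iff)
qed

lemma g0_ground_state_layer_weight:
  assumes g0: "is_g0 A0" and \<beta>: "\<beta> \<in> eigenspace V0 A0 e1" and t: "t \<in> {1..8}"
  shows "layer_weight t \<beta> = sqnorm V0 \<beta> / 8"
proof -
  obtain k where k: "\<beta> = g0_span k"
    using g0 \<beta> unfolding is_g0_def g0_span_def by blast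
  show ?thesis
    unfolding k sqnorm_V0_layers using t by (simp add: layer_weight_g0_span)
qed

lemma hermitian_g0:
  assumes "is_g0 A0"
  shows "hermitian_on V0 A0"
proof -
  have "(A0 x y = 0 \<or> A0 x y = 1) \<and> A0 x y = A0 y x" if "x \<in> V0" "y \<in> V0" for x y
    using assms that unfolding is_g0_def by blast
  then show ?thesis unfolding hermitian_on_def by force
qed

lemma g0_rayleigh_lower_bound:
  assumes g0: "is_g0 A0" and u: "supported V0 u"
  shows "e1 * sqnorm V0 u \<le> Re (qform V0 A0 u)"
  using g0 by (intro rayleigh_lower_bound[OF finite_V0 hermitian_g0[OF g0] _ u])
    (auto simp: is_g0_def min_eigenvalue_def)

section \<open>Ground states of gate graphs\<close>

lemma VG_eq: "VG R = {1..R} \<times> V0"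
  unfolding VG_def by auto

lemma finite_VG: "finite (VG R)"
  unfolding VG_eq using finite_V0 by simp

lemma sum_VG: "(\<Sum>x\<in>VG R. f x) = (\<Sum>q\<in>{1..R}. \<Sum>u\<in>V0. f (q,u))"
  unfolding VG_eq by (simp add: sum.cartesian_product)

definition block :: "(vert \<Rightarrow> complex) \<Rightarrow> nat \<Rightarrow> nat \<times> nat \<times> nat \<Rightarrow> complex" where
  "block \<alpha> q = (\<lambda>u. if u \<in> V0 then \<alpha> (q,u) else 0)"

lemma supported_block: "supported V0 (block \<alpha> q)"
  unfolding supported_def block_def by simp

lemma sqnorm_VG_blocks: "sqnorm (VG R) \<alpha> = (\<Sum>q\<in>{1..R}. sqnorm V0 (block \<alpha> q))"
  unfolding sqnorm_def sum_VG block_def by (intro sum.cong refl) auto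

definition block_diag :: "((nat \<times> nat \<times> nat) \<Rightarrow> (nat \<times> nat \<times> nat) \<Rightarrow> complex) \<Rightarrow> vert \<Rightarrow> vert \<Rightarrow> complex" where
  "block_diag A0 x y = (if fst x = fst y then A0 (snd x) (snd y) else 0)"

definition h_S :: "(nat \<times> nat \<times> nat) set \<Rightarrow> vert \<Rightarrow> vert \<Rightarrow> complex" where
  "h_S S x y = (if x = y \<and> node_of x \<in> S then 1 else 0)"

definition h_E :: "(nat \<times> nat \<times> nat) set set \<Rightarrow> vert \<Rightarrow> vert \<Rightarrow> complex" where
  "h_E E x y = (\<Sum>e\<in>E. if node_of x \<in> e \<and> node_of y \<in> e \<and> jof x = jof y then 1 else 0)"

lemma AG_decompose: "AG A0 S E = (\<lambda>x y. block_diag A0 x y + h_S S x y + h_E E x y)"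
proof (intro ext)
  fix x y :: vert
  obtain q z t j where x: "x = (q,z,t,j)" by (cases x) auto
  obtain q' z' t' j' where y: "y = (q',z',t',j')" by (cases y) auto
  show "AG A0 S E x y = block_diag A0 x y + h_S S x y + h_E E x y"
    unfolding x y AG_def block_diag_def h_S_def h_E_def node_of_def jof_def by auto
qed

lemma qform_block_diag: "qform (VG R) (block_diag A0) \<alpha> = (\<Sum>q\<in>{1..R}. qform V0 A0 (block \<alpha> q))"
proof -
  have row: "(\<Sum>q'\<in>{1..R}. \<Sum>u'\<in>V0. block_diag A0 (q,u) (q',u') * \<alpha> (q',u')) = (\<Sum>u'\<in>V0. A0 u u' * \<alpha> (q,u'))"
    if "q \<in> {1..R}" for q u
  proof -
    have "(\<Sum>q'\<in>{1..R}. \<Sum>u'\<in>V0. block_diag A0 (q,u) (q',u') * \<alpha> (q',u'))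
        = (\<Sum>q'\<in>{1..R}. if q = q' then (\<Sum>u'\<in>V0. A0 u u' * \<alpha> (q',u')) else 0)"
      unfolding block_diag_def by (intro sum.cong refl) auto
    then show ?thesis using that by simp
  qed
  have "qform (VG R) (block_diag A0) \<alpha> = (\<Sum>q\<in>{1..R}. \<Sum>u\<in>V0. cnj (\<alpha> (q,u))
      * (\<Sum>q'\<in>{1..R}. \<Sum>u'\<in>V0. block_diag A0 (q,u) (q',u') * \<alpha> (q',u')))"
    unfolding qform_def cinner_def mvec_def sum_VG ..
  also have "\<dots> = (\<Sum>q\<in>{1..R}. qform V0 A0 (block \<alpha> q))"
    unfolding qform_def cinner_def mvec_def block_def
  proof (intro sum.cong refl)
    fix q u assume "q \<in> {1..R}" "u \<in> V0"
    then show "cnj (\<alpha> (q,u)) * (\<Sum>q'\<in>{1..R}. \<Sum>u'\<in>V0. block_diag A0 (q,u) (q',u') * \<alpha> (q',u'))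
        = cnj (if u \<in> V0 then \<alpha> (q,u) else 0) * (\<Sum>u'\<in>V0. A0 u u' * (if u' \<in> V0 then \<alpha> (q,u') else 0))"
      using row[of q u] by simp
  qed
  finally show ?thesis .
qed

lemma qform_h_S_nonneg:
  assumes "finite V"
  shows "0 \<le> Re (qform V (h_S S) u)"
proof -
  have "mvec V (h_S S) u x = (if node_of x \<in> S then u x else 0)" if "x \<in> V" for x
  proof -
    have "mvec V (h_S S) u x = (\<Sum>y\<in>V. if y = x then (if node_of x \<in> S then u x else 0) else 0)"
      unfolding mvec_def h_S_def by (intro sum.cong refl) auto
    then show ?thesis using that assms by simp
  qed
  then have "Re (qform V (h_S S) u) = (\<Sum>x\<in>V. if node_of x \<in> S then (cmod (u x))\<^sup>2 else 0)"
    unfolding qform_def cinner_def Re_sum by (intro sum.cong refl) (simp add: cmod_power2 flip: power2_eq_square)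
  then show ?thesis by (simp add: sum_nonneg)
qed

text \<open>h_E is a sum of rank-one projections, one per edge e and index j.\<close>

lemma qform_h_E_nonneg:
  assumes "finite E"
  shows "0 \<le> Re (qform (VG R) (h_E E) u)"
proof (rule gram_qform_nonneg[where f = "\<lambda>(e,j) x. if node_of x \<in> e \<and> jof x = j then 1 else 0"])
  show "finite (E \<times> {..<8::nat})" using assms by simp
  fix x y assume "x \<in> VG R" "y \<in> VG R"
  then have "jof x < 8" unfolding VG_def V0_def jof_def by auto
  then show "h_E E x y = (\<Sum>i\<in>E \<times> {..<8}. cnj ((\<lambda>(e,j) x. if node_of x \<in> e \<and> jof x = j then 1 else 0) i x)
      * (\<lambda>(e,j) x. if node_of x \<in> e \<and> jof x = j then 1 else 0) i y)"
  proof -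
    have "(\<Sum>i\<in>E \<times> {..<8}. cnj ((\<lambda>(e,j) x. if node_of x \<in> e \<and> jof x = j then 1 else 0) i x)
      * (\<lambda>(e,j) x. if node_of x \<in> e \<and> jof x = j then 1 else 0) i y)
      = (\<Sum>e\<in>E. \<Sum>j<8. if j = jof x then (if node_of x \<in> e \<and> node_of y \<in> e \<and> jof x = jof y then 1 else 0) else 0)"
      unfolding sum.cartesian_product' by (intro sum.cong refl) auto
    with \<open>jof x < 8\<close> show ?thesis unfolding h_E_def by simp
  qed
qed

lemma hermitian_AG:
  assumes "is_g0 A0"
  shows "hermitian_on (VG R) (AG A0 S E)"
  unfolding hermitian_on_def AG_decompose
proof (intro ballI)
  fix x y assume "x \<in> VG R" "y \<in> VG R"
  then have "snd x \<in> V0" "snd y \<in> V0" unfolding VG_eq by auto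
  then have "A0 (snd y) (snd x) = cnj (A0 (snd x) (snd y))"
    using hermitian_g0[OF assms] unfolding hermitian_on_def by blast
  then have "block_diag A0 y x = cnj (block_diag A0 x y)"
    unfolding block_diag_def by auto
  moreover have "h_S S y x = cnj (h_S S x y)" "h_E E y x = cnj (h_E E x y)"
    unfolding h_S_def h_E_def cnj_sum by (auto intro: sum.cong)
  ultimately show "block_diag A0 y x + h_S S y x + h_E E y x
      = cnj (block_diag A0 x y + h_S S x y + h_E E x y)" by simp
qed

text \<open>Each block contributes at least e1 times its weight and h_S, h_E are positive semidefinite,
  so every block attains equality in the Rayleigh bound of g_0.\<close>

lemma block_of_ground_state:
  assumes g0: "is_g0 A0" and "finite E"
    and \<alpha>: "\<alpha> \<in> eigenspace (VG R) (AG A0 S E) e1" and q: "q \<in> {1..R}"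
  shows "block \<alpha> q \<in> eigenspace V0 A0 e1"
proof -
  define D where "D = (\<lambda>q. Re (qform V0 A0 (block \<alpha> q)) - e1 * sqnorm V0 (block \<alpha> q))"
  have D_nonneg: "0 \<le> D q" for q
    using g0_rayleigh_lower_bound[OF g0 supported_block] unfolding D_def by simp
  have "e1 * sqnorm (VG R) \<alpha> = Re (qform (VG R) (AG A0 S E) \<alpha>)"
    unfolding qform_eigenspace[OF \<alpha>] cinner_self_eq_sqnorm by simp
  also have "\<dots> = (\<Sum>q\<in>{1..R}. Re (qform V0 A0 (block \<alpha> q)))
      + Re (qform (VG R) (h_S S) \<alpha>) + Re (qform (VG R) (h_E E) \<alpha>)"
    unfolding AG_decompose qform_add_sum qform_block_diag by simp
  finally have "(\<Sum>q\<in>{1..R}. D q) + Re (qform (VG R) (h_S S) \<alpha>) + Re (qform (VG R) (h_E E) \<alpha>) = 0"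
    unfolding D_def sqnorm_VG_blocks by (simp add: sum_subtractf sum_distrib_left)
  moreover have "0 \<le> (\<Sum>q\<in>{1..R}. D q)" using D_nonneg by (simp add: sum_nonneg)
  ultimately have "(\<Sum>q\<in>{1..R}. D q) = 0"
    using qform_h_S_nonneg[OF finite_VG] qform_h_E_nonneg[OF \<open>finite E\<close>] by (smt (verit))
  then have "D q = 0"
    using q D_nonneg by (subst (asm) sum_nonneg_eq_0_iff) auto
  then show ?thesis
    using eigenvector_if_rayleigh_equality[OF finite_V0 hermitian_g0[OF g0] g0_rayleigh_lower_bound[OF g0]
        supported_block] unfolding D_def by simp
qed

lemma finite_nodes: "finite (nodes R U)"
proof (rule finite_subset)
  have "Tset u \<subseteq> {..8}" for u by (cases u) (auto simp: Tset_def)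
  then show "nodes R U \<subseteq> {..R} \<times> {..<2} \<times> {..8}"
    unfolding nodes_def by fastforce
qed simp

lemma gate_diagram_finite_edges: "gate_diagram R U S E \<Longrightarrow> finite E"
  unfolding gate_diagram_def
  by (rule finite_subset[of E "Pow (nodes R U)"]) (auto simp: finite_nodes)

definition weight_N :: "nat \<Rightarrow> (nat \<times> nat \<times> nat) set \<Rightarrow> (nat \<times> nat \<times> nat) set set \<Rightarrow> (vert \<Rightarrow> complex) \<Rightarrow> real" where
  "weight_N R S E \<alpha> = (\<Sum>x\<in>VG R. if x \<in> Nset R S E then (cmod (\<alpha> x))\<^sup>2 else 0)"

lemma weight_N_nonneg: "0 \<le> weight_N R S E \<alpha>"
  unfolding weight_N_def by (simp add: sum_nonneg)

lemma weight_N_eq_0_imp_zero: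
  assumes "weight_N R S E \<alpha> = 0" "x \<in> Nset R S E"
  shows "\<alpha> x = 0"
proof -
  have "x \<in> VG R" using assms(2) unfolding Nset_def by simp
  with assms finite_VG show ?thesis
    unfolding weight_N_def by (subst (asm) sum_nonneg_eq_0_iff) auto
qed

text \<open>Position 2 (for label 1) or 5 (otherwise) is not a node of element q, so the whole layer
  t = 2 resp. 5 of block q lies in \<N>.\<close>

lemma free_layer_in_Nset:
  assumes "gate_diagram R U S E" "q \<in> {1..R}" "u \<in> V0"
    and "fst (snd u) = (if U q = Id1 then 2 else 5)"
  shows "(q,u) \<in> Nset R S E"
proof -
  obtain z t j where u: "u = (z,t,j)" by (cases u) auto
  have "t \<notin> {1,3} \<union> Tset (U q)"
    using assms(4) unfolding u by (cases "U q") (auto simp: Tset_def)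
  then have "node_of (q,u) \<notin> nodes R U"
    unfolding u node_of_def nodes_def by simp
  then show ?thesis
    using assms(1-3) unfolding Nset_def gate_diagram_def VG_eq by auto
qed

lemma ground_state_sqnorm_le_weight_N:
  assumes g0: "is_g0 A0" and dg: "gate_diagram R U S E"
    and \<alpha>: "\<alpha> \<in> eigenspace (VG R) (AG A0 S E) e1"
  shows "sqnorm (VG R) \<alpha> \<le> 8 * weight_N R S E \<alpha>"
proof -
  define t where "t = (\<lambda>q. if U q = Id1 then 2 else (5::nat))"
  have t: "t q \<in> {1..8}" for q unfolding t_def by auto
  have "sqnorm (VG R) \<alpha> / 8 = (\<Sum>q\<in>{1..R}. sqnorm V0 (block \<alpha> q) / 8)"
    unfolding sqnorm_VG_blocks sum_divide_distrib ..
  also have "\<dots> = (\<Sum>q\<in>{1..R}. layer_weight (t q) (block \<alpha> q))"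
    using g0_ground_state_layer_weight[OF g0 block_of_ground_state[OF g0 gate_diagram_finite_edges[OF dg] \<alpha>] t]
    by (intro sum.cong refl) simp
  also have "\<dots> = (\<Sum>q\<in>{1..R}. \<Sum>u\<in>V0. if fst (snd u) = t q then (cmod (block \<alpha> q u))\<^sup>2 else 0)"
    using layer_weight_eq_sum_V0[OF t] by simp
  also have "\<dots> \<le> (\<Sum>q\<in>{1..R}. \<Sum>u\<in>V0. if (q,u) \<in> Nset R S E then (cmod (\<alpha> (q,u)))\<^sup>2 else 0)"
    using free_layer_in_Nset[OF dg] unfolding block_def t_def by (intro sum_mono) auto
  also have "\<dots> = weight_N R S E \<alpha>"
    unfolding weight_N_def sum_VG ..
  finally show ?thesis by simp
qed

section \<open>The graph G^SL\<close>

lemma sum_VSL: "(\<Sum>w\<in>VSL R. f w) = (\<Sum>x\<in>VG R. f (x,0) + f (x,1))"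
  unfolding VSL_def sum.cartesian_product' by simp

lemma supported_VSL_slice:
  assumes "supported (VSL R) w" "y \<notin> VG R \<or> d \<notin> {0,1}"
  shows "w (y,d) = 0"
proof -
  have "(y,d) \<notin> VSL R" using assms(2) unfolding VSL_def by auto
  then show ?thesis using assms(1) unfolding supported_def by blast
qed

lemma penalty_mvec:
  assumes "x \<in> VG R"
  shows "mvec (VSL R) (penalty R S E) w (x,d) = (if x \<in> Nset R S E then w (x,0) + w (x,1) else 0)"
proof -
  have "mvec (VSL R) (penalty R S E) w (x,d)
      = (\<Sum>y\<in>VG R. if y = x then (if x \<in> Nset R S E then w (x,0) + w (x,1) else 0) else 0)"
    unfolding mvec_def sum_VSL by (intro sum.cong refl) (auto simp: penalty_def Piplus_def)
  then show ?thesis using assms finite_VG by simp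
qed

lemma ASL_mvec:
  assumes x: "x \<in> VG R" and d: "d \<in> {0,1}"
  shows "mvec (VSL R) (ASL A0 R S E) w (x,d) = mvec (VG R) (AG A0 S E) (\<lambda>y. w (y,d)) x
      + (if x \<in> Nset R S E then w (x,0) + w (x,1) else 0)"
proof -
  have "mvec (VSL R) (ASL A0 R S E) w (x,d)
      = (\<Sum>y\<in>VSL R. AG A0 S E x (fst y) * (if d = snd y then 1 else 0) * w y)
        + mvec (VSL R) (penalty R S E) w (x,d)"
    unfolding mvec_def ASL_def by (simp add: distrib_right sum.distrib split_def)
  also have "(\<Sum>y\<in>VSL R. AG A0 S E x (fst y) * (if d = snd y then 1 else 0) * w y)
      = mvec (VG R) (AG A0 S E) (\<lambda>y. w (y,d)) x"
    unfolding sum_VSL mvec_def using d by (intro sum.cong refl) auto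
  finally show ?thesis unfolding penalty_mvec[OF x] .
qed

lemma ASL_eigen_equation:
  assumes "w \<in> eigenspace (VSL R) (ASL A0 R S E) \<mu>" "x \<in> VG R" "d \<in> {0,1}"
  shows "mvec (VG R) (AG A0 S E) (\<lambda>y. w (y,d)) x + (if x \<in> Nset R S E then w (x,0) + w (x,1) else 0)
      = complex_of_real \<mu> * w (x,d)"
proof -
  have "(x,d) \<in> VSL R" using assms(2,3) unfolding VSL_def by simp
  then show ?thesis
    using assms ASL_mvec[OF assms(2,3)] unfolding eigenspace_def by auto
qed

lemma ASL_eigen_antisymmetric_part:
  assumes w: "w \<in> eigenspace (VSL R) (ASL A0 R S E) \<mu>"
  shows "(\<lambda>y. w (y,0) - w (y,1)) \<in> eigenspace (VG R) (AG A0 S E) \<mu>"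
  unfolding eigenspace_def
proof (intro CollectI conjI ballI)
  have w_supp: "supported (VSL R) w" using w unfolding eigenspace_def by simp
  show "supported (VG R) (\<lambda>y. w (y,0) - w (y,1))"
    unfolding supported_def
  proof (intro allI impI)
    fix y assume "y \<notin> VG R"
    then show "w (y,0) - w (y,1) = 0" using supported_VSL_slice[OF w_supp] by simp
  qed
  fix x assume x: "x \<in> VG R"
  have "mvec (VG R) (AG A0 S E) (\<lambda>y. w (y,d)) x + (if x \<in> Nset R S E then w (x,0) + w (x,1) else 0)
      = complex_of_real \<mu> * w (x,d)" if "d \<in> {0,1}" for d
    using ASL_eigen_equation[OF w x that] .
  from this[of 0] this[of 1]
  show "mvec (VG R) (AG A0 S E) (\<lambda>y. w (y,0) - w (y,1)) x = complex_of_real \<mu> * (w (x,0) - w (x,1))"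
    unfolding mvec_diff by (simp add: right_diff_distrib) (metis add_diff_cancel_right)
qed

lemma ASL_eigen_symmetric_part:
  assumes w: "w \<in> eigenspace (VSL R) (ASL A0 R S E) \<mu>" and x: "x \<in> VG R"
  shows "mvec (VG R) (AG A0 S E) (\<lambda>y. w (y,0) + w (y,1)) x
      + (if x \<in> Nset R S E then 2 * (w (x,0) + w (x,1)) else 0) = complex_of_real \<mu> * (w (x,0) + w (x,1))"
proof -
  let ?P = "if x \<in> Nset R S E then w (x,0) + w (x,1) else 0"
  have "(mvec (VG R) (AG A0 S E) (\<lambda>y. w (y,0)) x + ?P) + (mvec (VG R) (AG A0 S E) (\<lambda>y. w (y,1)) x + ?P)
      = complex_of_real \<mu> * w (x,0) + complex_of_real \<mu> * w (x,1)"
    using ASL_eigen_equation[OF w x, of 0] ASL_eigen_equation[OF w x, of 1] by simp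
  then show ?thesis
    unfolding mvec_add by (cases "x \<in> Nset R S E") (simp_all add: algebra_simps)
qed

lemma symmetric_part_supported:
  assumes "w \<in> eigenspace (VSL R) (ASL A0 R S E) \<mu>"
  shows "supported (VG R) (\<lambda>y. w (y,0) + w (y,1))"
proof -
  have w_supp: "supported (VSL R) w" using assms unfolding eigenspace_def by simp
  show ?thesis
    unfolding supported_def
  proof (intro allI impI)
    fix y assume "y \<notin> VG R"
    then show "w (y,0) + w (y,1) = 0" using supported_VSL_slice[OF w_supp] by simp
  qed
qed

lemma of_real_weight_N:
  "complex_of_real (weight_N R S E v) = (\<Sum>x\<in>VG R. if x \<in> Nset R S E then cnj (v x) * v x else 0)"
  unfolding weight_N_def of_real_sum if_distrib[of complex_of_real] of_real_cmod_square of_real_0 ..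

lemma qform_penalized_eigen:
  assumes "\<forall>x\<in>VG R. mvec (VG R) M v x + (if x \<in> Nset R S E then 2 * v x else 0) = complex_of_real \<mu> * v x"
  shows "Re (qform (VG R) M v) = \<mu> * sqnorm (VG R) v - 2 * weight_N R S E v"
proof -
  have "qform (VG R) M v = (\<Sum>x\<in>VG R. complex_of_real \<mu> * (cnj (v x) * v x)
      - 2 * (if x \<in> Nset R S E then cnj (v x) * v x else 0))"
    unfolding qform_def cinner_def
  proof (intro sum.cong refl)
    fix x assume "x \<in> VG R"
    then have mvec_v: "mvec (VG R) M v x = complex_of_real \<mu> * v x - (if x \<in> Nset R S E then 2 * v x else 0)"
      using assms by (simp add: eq_diff_eq)
    show "cnj (v x) * mvec (VG R) M v x = complex_of_real \<mu> * (cnj (v x) * v x)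
        - 2 * (if x \<in> Nset R S E then cnj (v x) * v x else 0)"
      unfolding mvec_v by (cases "x \<in> Nset R S E") (simp_all add: algebra_simps)
  qed
  also have "\<dots> = complex_of_real \<mu> * cinner (VG R) v v - 2 * complex_of_real (weight_N R S E v)"
    unfolding cinner_def of_real_weight_N sum_subtractf by (simp only: sum_distrib_left)
  finally show ?thesis
    unfolding cinner_self_eq_sqnorm by simp
qed

lemma tensor_pm_apply:
  "tensor_pm s \<alpha> (x,d) = \<alpha> x * (if d = 0 then 1 else if d = 1 then s else 0) / complex_of_real (sqrt 2)"
  unfolding tensor_pm_def by simp

lemma tensor_minus_eigen:
  assumes \<alpha>: "\<alpha> \<in> eigenspace (VG R) (AG A0 S E) \<mu>"
  shows "tensor_pm (-1) \<alpha> \<in> eigenspace (VSL R) (ASL A0 R S E) \<mu>"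
  unfolding eigenspace_def
proof (intro CollectI conjI ballI)
  have "supported (VG R) \<alpha>" using \<alpha> unfolding eigenspace_def by simp
  then show "supported (VSL R) (tensor_pm (-1) \<alpha>)"
    unfolding supported_def VSL_def tensor_pm_def by auto
  fix xd assume "xd \<in> VSL R"
  then obtain x d where xd: "xd = (x,d)" and x: "x \<in> VG R" and d: "d \<in> {0,1}"
    unfolding VSL_def by auto
  define c where "c = (if d = 0 then 1 else if d = 1 then -1 else 0) / complex_of_real (sqrt 2)"
  have "(\<lambda>y. tensor_pm (-1) \<alpha> (y,d)) = (\<lambda>y. c * \<alpha> y)"
    unfolding tensor_pm_apply c_def by auto
  then have "mvec (VG R) (AG A0 S E) (\<lambda>y. tensor_pm (-1) \<alpha> (y,d)) x = c * (complex_of_real \<mu> * \<alpha> x)"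
    using \<alpha> x unfolding eigenspace_def by (simp add: mvec_scale)
  then show "mvec (VSL R) (ASL A0 R S E) (tensor_pm (-1) \<alpha>) xd = complex_of_real \<mu> * tensor_pm (-1) \<alpha> xd"
    unfolding xd ASL_mvec[OF x d] unfolding tensor_pm_apply c_def by simp
qed

lemma cinner_tensor_pm:
  assumes "cnj s * s = 1"
  shows "cinner (VSL R) (tensor_pm s \<alpha>) (tensor_pm s \<alpha>) = cinner (VG R) \<alpha> \<alpha>"
proof -
  have "cnj (tensor_pm s \<alpha> (x,0)) * tensor_pm s \<alpha> (x,0) + cnj (tensor_pm s \<alpha> (x,1)) * tensor_pm s \<alpha> (x,1)
      = cnj (\<alpha> x) * \<alpha> x" for x
    using assms unfolding tensor_pm_apply by (simp add: field_simps of_real_sqrt_2_square)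
  then show ?thesis unfolding cinner_def sum_VSL by simp
qed

lemma qform_penalty_tensor_plus:
  "Re (qform (VSL R) (penalty R S E) (tensor_pm 1 \<alpha>)) = 2 * weight_N R S E \<alpha>"
proof -
  have "qform (VSL R) (penalty R S E) (tensor_pm 1 \<alpha>)
      = (\<Sum>x\<in>VG R. 2 * (if x \<in> Nset R S E then cnj (\<alpha> x) * \<alpha> x else 0))"
    unfolding qform_def cinner_def sum_VSL
  proof (intro sum.cong refl)
    fix x assume "x \<in> VG R"
    then show "cnj (tensor_pm 1 \<alpha> (x,0)) * mvec (VSL R) (penalty R S E) (tensor_pm 1 \<alpha>) (x,0)
        + cnj (tensor_pm 1 \<alpha> (x,1)) * mvec (VSL R) (penalty R S E) (tensor_pm 1 \<alpha>) (x,1)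
        = 2 * (if x \<in> Nset R S E then cnj (\<alpha> x) * \<alpha> x else 0)"
      unfolding penalty_mvec[OF \<open>x \<in> VG R\<close>] tensor_pm_apply
      by (simp add: field_simps of_real_sqrt_2_square)
  qed
  also have "\<dots> = 2 * complex_of_real (weight_N R S E \<alpha>)"
    unfolding of_real_weight_N sum_distrib_left ..
  finally show ?thesis by simp
qed

locale e1_gate_graph =
  fixes A0 :: "(nat \<times> nat \<times> nat) \<Rightarrow> (nat \<times> nat \<times> nat) \<Rightarrow> complex"
    and R :: nat and U :: "nat \<Rightarrow> glabel"
    and S :: "(nat \<times> nat \<times> nat) set" and E :: "(nat \<times> nat \<times> nat) set set"
  assumes g0: "is_g0 A0"
    and diagram: "gate_diagram R U S E"
    and gate_graph: "min_eigenvalue (VG R) (AG A0 S E) e1"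
begin

lemma AG_rayleigh_lower_bound:
  "supported (VG R) u \<Longrightarrow> e1 * sqnorm (VG R) u \<le> Re (qform (VG R) (AG A0 S E) u)"
  using gate_graph
  by (intro rayleigh_lower_bound[OF finite_VG hermitian_AG[OF g0]]) (auto simp: min_eigenvalue_def)

lemma ASL_eigenvalue_ge:
  assumes "has_eigenvalue (VSL R) (ASL A0 R S E) \<mu>"
  shows "e1 \<le> \<mu>"
proof -
  obtain w x d where w: "w \<in> eigenspace (VSL R) (ASL A0 R S E) \<mu>" and x: "x \<in> VG R" and d: "d \<in> {0,1}"
    and nonzero: "w (x,d) \<noteq> 0"
    using assms unfolding has_eigenvalue_def VSL_def by blast
  show ?thesis
  proof (cases "w (x,0) = w (x,1)")
    case False
    then have "has_eigenvalue (VG R) (AG A0 S E) \<mu>"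
      using ASL_eigen_antisymmetric_part[OF w] x unfolding has_eigenvalue_def
      by (intro bexI[of _ "\<lambda>y. w (y,0) - w (y,1)"] bexI[of _ x]) auto
    then show ?thesis using gate_graph unfolding min_eigenvalue_def by blast
  next
    case True
    define v where "v = (\<lambda>y. w (y,0) + w (y,1))"
    have "v x \<noteq> 0" using True nonzero d unfolding v_def by auto
    then have pos: "0 < sqnorm (VG R) v"
      using sqnorm_eq_0_imp_zero[OF finite_VG _ x] sqnorm_nonneg[of "VG R" v] by force
    have "Re (qform (VG R) (AG A0 S E) v) = \<mu> * sqnorm (VG R) v - 2 * weight_N R S E v"
      using ASL_eigen_symmetric_part[OF w] unfolding v_def by (intro qform_penalized_eigen) simp
    with AG_rayleigh_lower_bound[OF symmetric_part_supported[OF w]] weight_N_nonneg[of R S E v]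
    have "e1 * sqnorm (VG R) v \<le> \<mu> * sqnorm (VG R) v" unfolding v_def by linarith
    with pos show ?thesis by simp
  qed
qed

lemma ASL_min_eigenvalue: "min_eigenvalue (VSL R) (ASL A0 R S E) e1"
proof -
  obtain \<alpha> x where \<alpha>: "\<alpha> \<in> eigenspace (VG R) (AG A0 S E) e1" and x: "x \<in> VG R" "\<alpha> x \<noteq> 0"
    using gate_graph unfolding min_eigenvalue_def has_eigenvalue_def by blast
  have "(x,0) \<in> VSL R" "tensor_pm (-1) \<alpha> (x,0) \<noteq> 0"
    using x unfolding VSL_def tensor_pm_apply by auto
  then have "has_eigenvalue (VSL R) (ASL A0 R S E) e1"
    using tensor_minus_eigen[OF \<alpha>] unfolding has_eigenvalue_def by blast
  then show ?thesis
    unfolding min_eigenvalue_def using ASL_eigenvalue_ge by blast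
qed

lemma ground_state_antisymmetric:
  assumes w: "w \<in> eigenspace (VSL R) (ASL A0 R S E) e1"
  shows "w (x,1) = - w (x,0)"
proof (cases "x \<in> VG R")
  case True
  define v where "v = (\<lambda>y. w (y,0) + w (y,1))"
  have eq: "\<forall>x\<in>VG R. mvec (VG R) (AG A0 S E) v x + (if x \<in> Nset R S E then 2 * v x else 0)
      = complex_of_real e1 * v x"
    using ASL_eigen_symmetric_part[OF w] unfolding v_def by simp
  have "Re (qform (VG R) (AG A0 S E) v) = e1 * sqnorm (VG R) v - 2 * weight_N R S E v"
    by (rule qform_penalized_eigen[OF eq])
  with AG_rayleigh_lower_bound[OF symmetric_part_supported[OF w]] weight_N_nonneg[of R S E v]
  have N_zero: "weight_N R S E v = 0" unfolding v_def by linarith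
  have "v \<in> eigenspace (VG R) (AG A0 S E) e1"
    unfolding eigenspace_def
  proof (intro CollectI conjI ballI)
    show "supported (VG R) v" using symmetric_part_supported[OF w] unfolding v_def .
    fix x assume "x \<in> VG R"
    then show "mvec (VG R) (AG A0 S E) v x = complex_of_real e1 * v x"
      using eq weight_N_eq_0_imp_zero[OF N_zero, of x] by (cases "x \<in> Nset R S E") auto
  qed
  then have "sqnorm (VG R) v \<le> 0"
    using ground_state_sqnorm_le_weight_N[OF g0 diagram] N_zero by fastforce
  then have "sqnorm (VG R) v = 0"
    using sqnorm_nonneg[of "VG R" v] by linarith
  then have "v x = 0"
    using sqnorm_eq_0_imp_zero[OF finite_VG _ True] by blast
  then show ?thesis unfolding v_def by (simp add: eq_neg_iff_add_eq_0 add.commute)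
next
  case False
  have "supported (VSL R) w" using w unfolding eigenspace_def by simp
  with False show ?thesis using supported_VSL_slice[of R w x 0] supported_VSL_slice[of R w x 1] by simp
qed

lemma ground_state_eq_tensor_minus:
  assumes w: "w \<in> eigenspace (VSL R) (ASL A0 R S E) e1"
  shows "w = tensor_pm (-1) (\<lambda>y. complex_of_real (sqrt 2) * w (y,0))"
proof
  fix xd :: "vert \<times> nat"
  obtain x d where xd: "xd = (x,d)" by (cases xd)
  have "supported (VSL R) w" using w unfolding eigenspace_def by simp
  then have "d \<notin> {0,1} \<Longrightarrow> w (x,d) = 0" using supported_VSL_slice by simp
  then show "w xd = tensor_pm (-1) (\<lambda>y. complex_of_real (sqrt 2) * w (y,0)) xd"
    using ground_state_antisymmetric[OF w, of x] unfolding xd tensor_pm_apply by auto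
qed

lemma ground_state_tensor_factor:
  assumes w: "w \<in> eigenspace (VSL R) (ASL A0 R S E) e1"
  shows "(\<lambda>y. complex_of_real (sqrt 2) * w (y,0)) \<in> eigenspace (VG R) (AG A0 S E) e1"
proof -
  have sqrt_2: "2 / complex_of_real (sqrt 2) = complex_of_real (sqrt 2)"
    by (simp add: field_simps of_real_sqrt_2_square)
  have "(\<lambda>y. complex_of_real (sqrt 2) * w (y,0)) = (\<lambda>y. (1 / complex_of_real (sqrt 2)) * (w (y,0) - w (y,1)))"
  proof
    fix y
    have "(1 / complex_of_real (sqrt 2)) * (w (y,0) - w (y,1)) = (2 / complex_of_real (sqrt 2)) * w (y,0)"
      using ground_state_antisymmetric[OF w, of y] by simp
    then show "complex_of_real (sqrt 2) * w (y,0) = (1 / complex_of_real (sqrt 2)) * (w (y,0) - w (y,1))"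
      unfolding sqrt_2 by simp
  qed
  then show ?thesis
    using eigenspace_scale[OF ASL_eigen_antisymmetric_part[OF w]] by (simp only:)
qed

lemma ASL_ground_space:
  "eigenspace (VSL R) (ASL A0 R S E) e1 = {tensor_pm (-1) \<alpha> | \<alpha>. \<alpha> \<in> eigenspace (VG R) (AG A0 S E) e1}"
  using ground_state_eq_tensor_minus ground_state_tensor_factor tensor_minus_eigen by blast

lemma penalty_on_tensor_plus_ground_state:
  assumes \<alpha>: "\<alpha> \<in> eigenspace (VG R) (AG A0 S E) e1"
    and unit: "cinner (VSL R) (tensor_pm 1 \<alpha>) (tensor_pm 1 \<alpha>) = 1"
  shows "1/4 \<le> Re (qform (VSL R) (penalty R S E) (tensor_pm 1 \<alpha>))"
proof -
  have "sqnorm (VG R) \<alpha> = 1"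
    using cinner_tensor_pm[of 1 R \<alpha>] unit unfolding cinner_self_eq_sqnorm by simp
  then show ?thesis
    using ground_state_sqnorm_le_weight_N[OF g0 diagram \<alpha>] unfolding qform_penalty_tensor_plus by simp
qed

end

theorem lemma1:
  fixes A0 :: "(nat \<times> nat \<times> nat) \<Rightarrow> (nat \<times> nat \<times> nat) \<Rightarrow> complex"
    and R :: nat and U :: "nat \<Rightarrow> glabel"
    and S :: "(nat \<times> nat \<times> nat) set" and E :: "(nat \<times> nat \<times> nat) set set"
  assumes g0: "is_g0 A0"
    and diagram: "gate_diagram R U S E"
    and gate_graph: "min_eigenvalue (VG R) (AG A0 S E) e1"
  shows "min_eigenvalue (VSL R) (ASL A0 R S E) e1
     \<and> eigenspace (VSL R) (ASL A0 R S E) e1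
         = {tensor_pm (-1) \<alpha> | \<alpha>. \<alpha> \<in> eigenspace (VG R) (AG A0 S E) e1}
     \<and> (\<forall>v \<in> {tensor_pm 1 \<alpha> | \<alpha>. \<alpha> \<in> eigenspace (VG R) (AG A0 S E) e1}.
           cinner (VSL R) v v = 1 \<longrightarrow> 1/4 \<le> Re (qform (VSL R) (penalty R S E) v))"
proof -
  interpret e1_gate_graph A0 R U S E
    using assms by unfold_locales
  show ?thesis
    using ASL_min_eigenvalue ASL_ground_space penalty_on_tensor_plus_ground_state by blast
qed

end
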